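(* Let $G$ be a Hausdorff topological group, $Y$ a topological space with a topological partial action $\theta$ of $G$, and $X$ a nonempty compact space, with $\hat\theta$ the induced partial action on $C(X,Y)$. Then: (i) $G*Y$ is open in $G\times Y$ if and only if $G*C(X,Y)$ is open in $G\times C(X,Y)$; (ii) $\theta$ is nice if and only if $\hat\theta$ is nice.
   Context: A topological partial action of $G$ on $Y$ is a family $\{\theta_g\colon Y_{g^{-1}}\to Y_g\}_{g\in G}$ of homeomorphisms between open subsets of $Y$ with $Y_e=Y$, $\theta_e=\mathrm{id}_Y$, $\theta_{g^{-1}}=\theta_g^{-1}$ and $\theta_g\circ\theta_h$ a restriction of $\theta_{gh}$ for all $g,h$. Its domain is $G*Y=\{(g,y)\in G\times Y: y\in Y_{g^{-1}}\}$; $\theta$ is continuous if $G*Y\to Y$, $(g,y)\mapsto\theta_g(y)$, is continuous (subspace topology), and nice if it is continuous and $G*Y$ is open in $G\times Y$. $C(X,Y)$ carries the compact-open topology. The induced partial action $\hat\theta$ on $C(X,Y)$ has $C(X,Y)_g=\{f: f(X)\subset Y_g\}$ and $\hat\theta_g(f)=\theta_g\circ f$; its domain is $G*C(X,Y)=\{(g,f)\in G\times C(X,Y): f(X)\subset Y_{g^{-1}}\}$. *)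

theory Defs
  imports "HOL-Analysis.Analysis"
begin

text \<open>The group G is a type of class topological_group_add (group operation +,
 inverse uminus, neutral element 0; commutativity is NOT assumed).
 A partial action is given by domains D g (= Y_g) and maps theta g, where
 theta g is only relevant on D (- g) (= Y_{g^{-1}}).\<close>

definition partial_action ::
  "'y topology \<Rightarrow> ('g::group_add \<Rightarrow> 'y set) \<Rightarrow> ('g \<Rightarrow> 'y \<Rightarrow> 'y) \<Rightarrow> bool" where
  "partial_action TY D \<theta> \<longleftrightarrow>
     (\<forall>g. openin TY (D g)) \<and>
     (\<forall>g. homeomorphic_map (subtopology TY (D (- g))) (subtopology TY (D g)) (\<theta> g)) \<and>
     D 0 = topspace TY \<and> (\<forall>y \<in> topspace TY. \<theta> 0 y = y) \<and>
     (\<forall>g. \<forall>y \<in> D (- g). \<theta> (- g) (\<theta> g y) = y) \<and>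
     (\<forall>g. \<forall>y \<in> D g. \<theta> g (\<theta> (- g) y) = y) \<and>
     (\<forall>g h. \<forall>y. y \<in> D (- h) \<and> \<theta> h y \<in> D (- g) \<longrightarrow>
         y \<in> D (- (g + h)) \<and> \<theta> g (\<theta> h y) = \<theta> (g + h) y)"

definition pa_domain :: "('g::group_add \<Rightarrow> 'y set) \<Rightarrow> ('g \<times> 'y) set" where
  "pa_domain D = {(g, y). y \<in> D (- g)}"

definition pa_continuous ::
  "'y topology \<Rightarrow> ('g::{group_add,topological_space} \<Rightarrow> 'y set) \<Rightarrow> ('g \<Rightarrow> 'y \<Rightarrow> 'y) \<Rightarrow> bool" where
  "pa_continuous TY D \<theta> \<longleftrightarrow>
     continuous_map (subtopology (prod_topology euclidean TY) (pa_domain D)) TY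
       (\<lambda>(g, y). \<theta> g y)"

definition pa_nice ::
  "'y topology \<Rightarrow> ('g::{group_add,topological_space} \<Rightarrow> 'y set) \<Rightarrow> ('g \<Rightarrow> 'y \<Rightarrow> 'y) \<Rightarrow> bool" where
  "pa_nice TY D \<theta> \<longleftrightarrow>
     pa_continuous TY D \<theta> \<and> openin (prod_topology euclidean TY) (pa_domain D)"

text \<open>C(X,Y): continuous maps, represented extensionally (undefined off topspace X).\<close>
definition cmaps :: "'x topology \<Rightarrow> 'y topology \<Rightarrow> ('x \<Rightarrow> 'y) set" where
  "cmaps TX TY = {f. continuous_map TX TY f \<and> f \<in> extensional (topspace TX)}"

text \<open>Compact-open topology: generated by the subbasis of sets {f. f(K) \<subseteq> U},
 K compact in X, U open in Y (K = {} gives the whole space).\<close>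
definition compact_open :: "'x topology \<Rightarrow> 'y topology \<Rightarrow> ('x \<Rightarrow> 'y) topology" where
  "compact_open TX TY = topology_generated_by
     {{f \<in> cmaps TX TY. f ` K \<subseteq> U} | K U. compactin TX K \<and> openin TY U}"

definition induced_dom ::
  "'x topology \<Rightarrow> 'y topology \<Rightarrow> ('g \<Rightarrow> 'y set) \<Rightarrow> 'g \<Rightarrow> ('x \<Rightarrow> 'y) set" where
  "induced_dom TX TY D g = {f \<in> cmaps TX TY. f ` topspace TX \<subseteq> D g}"

definition induced_act ::
  "'x topology \<Rightarrow> ('g \<Rightarrow> 'y \<Rightarrow> 'y) \<Rightarrow> 'g \<Rightarrow> ('x \<Rightarrow> 'y) \<Rightarrow> ('x \<Rightarrow> 'y)" where
  "induced_act TX \<theta> g f = restrict (\<theta> g \<circ> f) (topspace TX)"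

end

theory Submission
  imports Defs
begin

(*
  For W \<subseteq> T \<times> Y let W^X be the set of pairs (t, f) with f \<in> C(X, Y) and {t} \<times> f(X) \<subseteq> W;
  then G*C(X,Y) = (G*Y)^X. If W is open, so is W^X by the tube lemma, since f(X) is compact.
  Conversely W is the preimage of W^X under the continuous map (t, y) \<mapsto> (t, const y), as X is
  nonempty. Continuity transfers in the same way: if \<phi> is continuous on W, the tube lemma applied
  to f(K) for compact K \<subseteq> X shows that (t, f) \<mapsto> \<phi>(t, f(-)) is continuous on W^X for the
  compact-open topology; conversely \<phi>(t, y) is the value at any point of X of the image of
  (t, const y).
*)

lemma Union_compact_open_subbasis:
  "\<Union>{{f \<in> cmaps TX TY. f ` K \<subseteq> U} | K U. compactin TX K \<and> openin TY U} = cmaps TX TY"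
proof (rule subset_antisym)
  have "{f \<in> cmaps TX TY. f ` {} \<subseteq> {}} \<in>
      {{f \<in> cmaps TX TY. f ` K \<subseteq> U} | K U. compactin TX K \<and> openin TY U}"
    by blast
  then show "cmaps TX TY \<subseteq> \<Union>{{f \<in> cmaps TX TY. f ` K \<subseteq> U} | K U. compactin TX K \<and> openin TY U}"
    by auto
qed auto

lemma topspace_compact_open [simp]: "topspace (compact_open TX TY) = cmaps TX TY"
  unfolding compact_open_def topology_generated_by_topspace Union_compact_open_subbasis ..

lemma openin_compact_open_subbasic:
  assumes "compactin TX K" "openin TY U"
  shows "openin (compact_open TX TY) {f \<in> cmaps TX TY. f ` K \<subseteq> U}"
  unfolding compact_open_def using assms by (intro topology_generated_by_Basis) blast

lemma continuous_map_into_compact_open: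
  assumes "\<And>z. z \<in> topspace T \<Longrightarrow> h z \<in> cmaps TX TY"
    and "\<And>K U. compactin TX K \<Longrightarrow> openin TY U \<Longrightarrow>
          openin T {z \<in> topspace T. h z ` K \<subseteq> U}"
  shows "continuous_map T (compact_open TX TY) h"
  unfolding compact_open_def
proof (rule continuous_on_generated_topo)
  fix V assume "V \<in> {{f \<in> cmaps TX TY. f ` K \<subseteq> U} | K U. compactin TX K \<and> openin TY U}"
  then obtain K U where V: "V = {f \<in> cmaps TX TY. f ` K \<subseteq> U}" "compactin TX K" "openin TY U"
    by blast
  have "h -` V \<inter> topspace T = {z \<in> topspace T. h z ` K \<subseteq> U}"
    using V(1) assms(1) by auto
  then show "openin T (h -` V \<inter> topspace T)"
    using assms(2)[OF V(2,3)] by (simp only:)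
next
  show "h ` topspace T \<subseteq>
      \<Union>{{f \<in> cmaps TX TY. f ` K \<subseteq> U} | K U. compactin TX K \<and> openin TY U}"
    unfolding Union_compact_open_subbasis using assms(1) by blast
qed

lemma continuous_map_evaluation_compact_open:
  assumes "x \<in> topspace TX"
  shows "continuous_map (compact_open TX TY) TY (\<lambda>f. f x)"
  unfolding continuous_map_def
proof (intro conjI allI impI)
  show "(\<lambda>f. f x) \<in> topspace (compact_open TX TY) \<rightarrow> topspace TY"
  proof
    fix f assume "f \<in> topspace (compact_open TX TY)"
    then have "continuous_map TX TY f" by (simp add: cmaps_def)
    then show "f x \<in> topspace TY" using assms by (meson continuous_map_funspace funcset_mem)
  qed
next
  fix U assume "openin TY U"
  moreover have "compactin TX {x}" using assms by simp
  ultimately have "openin (compact_open TX TY) {f \<in> cmaps TX TY. f ` {x} \<subseteq> U}"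
    by (rule openin_compact_open_subbasic[rotated])
  then show "openin (compact_open TX TY) {f \<in> topspace (compact_open TX TY). f x \<in> U}"
    by simp
qed

definition const_cmap :: "'x topology \<Rightarrow> 'y \<Rightarrow> 'x \<Rightarrow> 'y" where
  "const_cmap TX y = restrict (\<lambda>_. y) (topspace TX)"

lemma const_cmap_in_cmaps:
  assumes "y \<in> topspace TY" shows "const_cmap TX y \<in> cmaps TX TY"
proof -
  have "continuous_map TX TY (\<lambda>_. y)" using assms by simp
  then have "continuous_map TX TY (const_cmap TX y)"
    by (rule continuous_map_eq) (simp add: const_cmap_def)
  then show ?thesis unfolding cmaps_def const_cmap_def by simp
qed

lemma continuous_map_const_cmap: "continuous_map TY (compact_open TX TY) (const_cmap TX)"
proof (rule continuous_map_into_compact_open)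
  fix K U assume K: "compactin TX K" and U: "openin TY U"
  show "openin TY {y \<in> topspace TY. const_cmap TX y ` K \<subseteq> U}"
  proof (cases "K = {}")
    case False
    have "K \<subseteq> topspace TX" using K compactin_subset_topspace by blast
    then have "{y \<in> topspace TY. const_cmap TX y ` K \<subseteq> U} = U"
      using False openin_subset[OF U] by (auto simp: const_cmap_def)
    then show ?thesis using U by simp
  qed simp
qed (rule const_cmap_in_cmaps)

lemma continuous_map_pair_const_cmap:
  "continuous_map (prod_topology T TY) (prod_topology T (compact_open TX TY))
     (\<lambda>z. (fst z, const_cmap TX (snd z)))"
proof (rule continuous_map_pairedI)
  show "continuous_map (prod_topology T TY) T (\<lambda>z. fst z)"
    by (rule continuous_map_fst)
  show "continuous_map (prod_topology T TY) (compact_open TX TY) (\<lambda>z. const_cmap TX (snd z))"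
    using continuous_map_compose[OF continuous_map_snd continuous_map_const_cmap]
    by (simp add: o_def)
qed

lemma openin_compact_open_tube:
  assumes W: "openin (prod_topology T TY) W" and K: "compactin TX K"
  shows "openin (prod_topology T (compact_open TX TY))
           {(t, f) \<in> topspace T \<times> cmaps TX TY. \<forall>k\<in>K. (t, f k) \<in> W}"
    (is "openin ?P ?S")
proof (subst openin_subopen, intro ballI)
  fix z assume "z \<in> ?S"
  then obtain t f where z: "z = (t, f)" "t \<in> topspace T" "f \<in> cmaps TX TY" "{t} \<times> f ` K \<subseteq> W"
    by auto
  have "compactin TY (f ` K)"
    using K z(3) by (intro image_compactin) (auto simp: cmaps_def)
  then obtain V N where VN: "openin T V" "openin TY N" "t \<in> V" "f ` K \<subseteq> N" "V \<times> N \<subseteq> W"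
    using tube_lemma_right[OF W _ z(2,4)] by blast
  show "\<exists>M. openin ?P M \<and> z \<in> M \<and> M \<subseteq> ?S"
  proof (intro exI conjI)
    show "openin ?P (V \<times> {f \<in> cmaps TX TY. f ` K \<subseteq> N})"
      using VN(1) openin_compact_open_subbasic[OF K VN(2)] by (simp add: openin_prod_Times_iff)
    show "z \<in> V \<times> {f \<in> cmaps TX TY. f ` K \<subseteq> N}"
      using z VN by auto
    show "V \<times> {f \<in> cmaps TX TY. f ` K \<subseteq> N} \<subseteq> ?S"
      using VN(5) openin_subset[OF VN(1)] by auto
  qed
qed

definition fibre_cmaps ::
  "'t topology \<Rightarrow> 'x topology \<Rightarrow> 'y topology \<Rightarrow> ('t \<times> 'y) set \<Rightarrow> ('t \<times> ('x \<Rightarrow> 'y)) set" where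
  "fibre_cmaps T TX TY W = {(t, f) \<in> topspace T \<times> cmaps TX TY. \<forall>x\<in>topspace TX. (t, f x) \<in> W}"

lemma const_cmap_in_fibre_cmaps_iff:
  assumes "topspace TX \<noteq> {}" "t \<in> topspace T" "y \<in> topspace TY"
  shows "(t, const_cmap TX y) \<in> fibre_cmaps T TX TY W \<longleftrightarrow> (t, y) \<in> W"
  using assms const_cmap_in_cmaps by (auto simp: fibre_cmaps_def const_cmap_def)

lemma openin_fibre_cmaps_iff:
  assumes "compact_space TX" "topspace TX \<noteq> {}" "W \<subseteq> topspace (prod_topology T TY)"
  shows "openin (prod_topology T (compact_open TX TY)) (fibre_cmaps T TX TY W) \<longleftrightarrow>
         openin (prod_topology T TY) W"
proof
  assume "openin (prod_topology T (compact_open TX TY)) (fibre_cmaps T TX TY W)"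
  then have "openin (prod_topology T TY)
      {z \<in> topspace (prod_topology T TY). (fst z, const_cmap TX (snd z)) \<in> fibre_cmaps T TX TY W}"
    by (rule openin_continuous_map_preimage[OF continuous_map_pair_const_cmap])
  also have "{z \<in> topspace (prod_topology T TY).
      (fst z, const_cmap TX (snd z)) \<in> fibre_cmaps T TX TY W} = W"
    using assms(2,3) by (auto simp: const_cmap_in_fibre_cmaps_iff)
  finally show "openin (prod_topology T TY) W" .
next
  assume "openin (prod_topology T TY) W"
  then have "openin (prod_topology T (compact_open TX TY))
      {(t, f) \<in> topspace T \<times> cmaps TX TY. \<forall>x\<in>topspace TX. (t, f x) \<in> W}"
    using assms(1) unfolding compact_space_def by (rule openin_compact_open_tube)
  then show "openin (prod_topology T (compact_open TX TY)) (fibre_cmaps T TX TY W)"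
    by (simp add: fibre_cmaps_def)
qed

lemma fibrewise_comp_image_subset_iff:
  assumes Q: "{w \<in> topspace (subtopology (prod_topology T TY) W). \<phi> w \<in> U} = Q \<inter> W"
    and KX: "K \<subseteq> topspace TX" and tf: "(t, f) \<in> fibre_cmaps T TX TY W"
  shows "restrict (\<lambda>x. \<phi> (t, f x)) (topspace TX) ` K \<subseteq> U \<longleftrightarrow> (\<forall>k\<in>K. (t, f k) \<in> Q)"
proof -
  have "\<phi> (t, f k) \<in> U \<longleftrightarrow> (t, f k) \<in> Q" if "k \<in> K" for k
  proof -
    have "f k \<in> topspace TY"
      using tf that KX by (auto simp: fibre_cmaps_def cmaps_def dest!: continuous_map_funspace)
    then have "(t, f k) \<in> topspace (subtopology (prod_topology T TY) W)"
      using tf that KX by (auto simp: fibre_cmaps_def)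
    then show ?thesis
      using eqset_imp_iff[OF Q, of "(t, f k)"] by auto
  qed
  moreover have "restrict (\<lambda>x. \<phi> (t, f x)) (topspace TX) ` K \<subseteq> U \<longleftrightarrow> (\<forall>k\<in>K. \<phi> (t, f k) \<in> U)"
    using KX by (auto simp: image_subset_iff)
  ultimately show ?thesis by blast
qed

lemma continuous_map_fibrewise_comp:
  assumes \<phi>: "continuous_map (subtopology (prod_topology T TY) W) TY \<phi>"
  shows "continuous_map (subtopology (prod_topology T (compact_open TX TY)) (fibre_cmaps T TX TY W))
           (compact_open TX TY) (\<lambda>(t, f). restrict (\<lambda>x. \<phi> (t, f x)) (topspace TX))"
proof (rule continuous_map_into_compact_open)
  fix z assume "z \<in> topspace (subtopology (prod_topology T (compact_open TX TY)) (fibre_cmaps T TX TY W))"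
  then obtain t f where z: "z = (t, f)" "t \<in> topspace T" "continuous_map TX TY f"
      "\<forall>x\<in>topspace TX. (t, f x) \<in> W"
    by (auto simp: fibre_cmaps_def cmaps_def)
  have "continuous_map TX (subtopology (prod_topology T TY) W) (\<lambda>x. (t, f x))"
    using z(2-4) by (intro continuous_map_into_subtopology continuous_map_pairedI) auto
  then have "continuous_map TX TY (\<phi> \<circ> (\<lambda>x. (t, f x)))"
    using \<phi> by (rule continuous_map_compose)
  then have "continuous_map TX TY (restrict (\<lambda>x. \<phi> (t, f x)) (topspace TX))"
    by (rule continuous_map_eq) simp
  then show "(case z of (t, f) \<Rightarrow> restrict (\<lambda>x. \<phi> (t, f x)) (topspace TX)) \<in> cmaps TX TY"
    using z(1) by (simp add: cmaps_def)
next
  fix K U assume K: "compactin TX K" and U: "openin TY U"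
  let ?S = "subtopology (prod_topology T (compact_open TX TY)) (fibre_cmaps T TX TY W)"
  have "openin (subtopology (prod_topology T TY) W)
      {w \<in> topspace (subtopology (prod_topology T TY) W). \<phi> w \<in> U}"
    using \<phi> U by (rule openin_continuous_map_preimage)
  then obtain Q where Q: "openin (prod_topology T TY) Q"
      "{w \<in> topspace (subtopology (prod_topology T TY) W). \<phi> w \<in> U} = Q \<inter> W"
    by (meson openin_subtopology)
  have KX: "K \<subseteq> topspace TX" using K compactin_subset_topspace by blast
  let ?tube = "{(t, f) \<in> topspace T \<times> cmaps TX TY. \<forall>k\<in>K. (t, f k) \<in> Q}"
  have image_in_U_iff: "(case z of (t, f) \<Rightarrow> restrict (\<lambda>x. \<phi> (t, f x)) (topspace TX)) ` K \<subseteq> U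
      \<longleftrightarrow> z \<in> ?tube" if "z \<in> fibre_cmaps T TX TY W" for z
  proof -
    obtain t f where z: "z = (t, f)" by (cases z)
    then have tf: "(t, f) \<in> fibre_cmaps T TX TY W" using that by simp
    then have "(t, f) \<in> ?tube \<longleftrightarrow> (\<forall>k\<in>K. (t, f k) \<in> Q)"
      by (simp add: fibre_cmaps_def)
    then show ?thesis
      unfolding z prod.case using fibrewise_comp_image_subset_iff[OF Q(2) KX tf] by blast
  qed
  have "topspace ?S = fibre_cmaps T TX TY W"
    by (auto simp: fibre_cmaps_def)
  then have "{z \<in> topspace ?S. (case z of (t, f) \<Rightarrow> restrict (\<lambda>x. \<phi> (t, f x)) (topspace TX)) ` K \<subseteq> U}
      = fibre_cmaps T TX TY W \<inter> ?tube"
    using image_in_U_iff by blast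
  moreover have "openin (prod_topology T (compact_open TX TY)) ?tube"
    using Q(1) K by (rule openin_compact_open_tube)
  ultimately show "openin ?S
      {z \<in> topspace ?S. (case z of (t, f) \<Rightarrow> restrict (\<lambda>x. \<phi> (t, f x)) (topspace TX)) ` K \<subseteq> U}"
    by (simp add: openin_subtopology_Int2)
qed

lemma continuous_map_fibrewise_comp_iff:
  assumes "topspace TX \<noteq> {}"
  shows "continuous_map (subtopology (prod_topology T (compact_open TX TY)) (fibre_cmaps T TX TY W))
           (compact_open TX TY) (\<lambda>(t, f). restrict (\<lambda>x. \<phi> (t, f x)) (topspace TX)) \<longleftrightarrow>
         continuous_map (subtopology (prod_topology T TY) W) TY \<phi>"
    (is "continuous_map ?S _ ?\<Phi> \<longleftrightarrow> continuous_map ?R TY \<phi>")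
proof
  assume \<Phi>: "continuous_map ?S (compact_open TX TY) ?\<Phi>"
  obtain x0 where x0: "x0 \<in> topspace TX" using assms by blast
  have "continuous_map ?R ?S (\<lambda>z. (fst z, const_cmap TX (snd z)))"
  proof (rule continuous_map_into_subtopology)
    show "continuous_map ?R (prod_topology T (compact_open TX TY)) (\<lambda>z. (fst z, const_cmap TX (snd z)))"
      by (rule continuous_map_from_subtopology[OF continuous_map_pair_const_cmap])
    show "(\<lambda>z. (fst z, const_cmap TX (snd z))) \<in> topspace ?R \<rightarrow> fibre_cmaps T TX TY W"
      using assms by (auto simp: const_cmap_in_fibre_cmaps_iff)
  qed
  then have "continuous_map ?R (compact_open TX TY) (?\<Phi> \<circ> (\<lambda>z. (fst z, const_cmap TX (snd z))))"
    using \<Phi> by (rule continuous_map_compose)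
  then have "continuous_map ?R TY ((\<lambda>f. f x0) \<circ> (?\<Phi> \<circ> (\<lambda>z. (fst z, const_cmap TX (snd z)))))"
    using continuous_map_evaluation_compact_open[OF x0] by (rule continuous_map_compose)
  then show "continuous_map ?R TY \<phi>"
    by (rule continuous_map_eq) (auto simp: const_cmap_def x0)
next
  assume "continuous_map ?R TY \<phi>"
  then show "continuous_map ?S (compact_open TX TY) ?\<Phi>"
    by (rule continuous_map_fibrewise_comp)
qed

theorem proposition3p3:
  fixes TX :: "'x topology" and TY :: "'y topology"
    and D :: "'g::{topological_group_add, t2_space} \<Rightarrow> 'y set"
    and \<theta> :: "'g \<Rightarrow> 'y \<Rightarrow> 'y"
  assumes "partial_action TY D \<theta>"
    and "compact_space TX" and "topspace TX \<noteq> {}"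
  shows "(openin (prod_topology euclidean TY) (pa_domain D) \<longleftrightarrow>
          openin (prod_topology euclidean (compact_open TX TY))
                 (pa_domain (induced_dom TX TY D)))
       \<and> (pa_nice TY D \<theta> \<longleftrightarrow>
          pa_nice (compact_open TX TY) (induced_dom TX TY D) (induced_act TX \<theta>))"
proof -
  have dom: "pa_domain (induced_dom TX TY D) = fibre_cmaps euclidean TX TY (pa_domain D)"
    by (auto simp: pa_domain_def induced_dom_def fibre_cmaps_def)
  have act: "(\<lambda>(g, f). induced_act TX \<theta> g f) =
      (\<lambda>(g, f). restrict (\<lambda>x. (\<lambda>(g, y). \<theta> g y) (g, f x)) (topspace TX))"
    by (simp add: induced_act_def o_def)
  have "D g \<subseteq> topspace TY" for g
    using assms(1) openin_subset unfolding partial_action_def by blast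
  then have "pa_domain D \<subseteq> topspace (prod_topology euclidean TY)"
    by (auto simp: pa_domain_def)
  then have domain_open: "openin (prod_topology euclidean TY) (pa_domain D) \<longleftrightarrow>
      openin (prod_topology euclidean (compact_open TX TY)) (pa_domain (induced_dom TX TY D))"
    unfolding dom using openin_fibre_cmaps_iff[OF assms(2,3)] by blast
  have action_continuous: "pa_continuous TY D \<theta> \<longleftrightarrow>
      pa_continuous (compact_open TX TY) (induced_dom TX TY D) (induced_act TX \<theta>)"
    unfolding pa_continuous_def dom act
    using continuous_map_fibrewise_comp_iff[OF assms(3)] by blast
  show ?thesis
    unfolding pa_nice_def using domain_open action_continuous by blast
qed

end
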